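(* Let $K$ be a field, $I\subset R=K[x_1,\ldots,x_n]$ a monomial ideal, and $h$ a monomial in $R$ such that $\gcd(h,u)=1$ for every minimal monomial generator $u$ of $I$. Then $I$ has the nearly copersistence property if and only if $hI$ has the nearly copersistence property.
   Context: A monomial ideal $I\subset R$ has the nearly copersistence property if there exist a positive integer $s$ and a monomial prime ideal $\mathfrak{p}$ such that $\mathrm{Ass}_R(R/I^m)\cup\{\mathfrak{p}\}\supseteq\mathrm{Ass}_R(R/I^{m+1})$ for all $1\le m\le s$, and $\mathrm{Ass}_R(R/I^m)\supseteq\mathrm{Ass}_R(R/I^{m+1})$ for all $m\ge s+1$. *)

theory Defs
  imports "HOL-Library.Poly_Mapping"
begin

(* Polynomial ring K[x_v : v in 'v] in the finitely many variables indexed by the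
   finite type 'v (so n = CARD('v)): polynomials are finitely supported maps from
   exponent vectors ('v \<Rightarrow>\<^sub>0 nat) to coefficients. *)
type_synonym ('v, 'k) mpoly = "('v \<Rightarrow>\<^sub>0 nat) \<Rightarrow>\<^sub>0 'k"

definition is_ideal :: "'a::comm_ring_1 set \<Rightarrow> bool" where
  "is_ideal I \<longleftrightarrow> 0 \<in> I \<and> (\<forall>a\<in>I. \<forall>b\<in>I. a + b \<in> I) \<and> (\<forall>r. \<forall>a\<in>I. r * a \<in> I)"

definition ideal_gen :: "'a::comm_ring_1 set \<Rightarrow> 'a set" where
  "ideal_gen S = \<Inter>{J. is_ideal J \<and> S \<subseteq> J}"

fun ideal_pow :: "'a::comm_ring_1 set \<Rightarrow> nat \<Rightarrow> 'a set" where
  "ideal_pow I 0 = UNIV"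
| "ideal_pow I (Suc m) = ideal_gen {a * b | a b. a \<in> I \<and> b \<in> ideal_pow I m}"

definition prime_ideal :: "'a::comm_ring_1 set \<Rightarrow> bool" where
  "prime_ideal P \<longleftrightarrow> is_ideal P \<and> P \<noteq> UNIV \<and> (\<forall>a b. a * b \<in> P \<longrightarrow> a \<in> P \<or> b \<in> P)"

(* Ass_R(R/I): prime ideals that are annihilators (I : f) of an element f + I of R/I *)
definition Ass :: "'a::comm_ring_1 set \<Rightarrow> 'a set set" where
  "Ass I = {P. prime_ideal P \<and> (\<exists>f. P = {g. g * f \<in> I})}"

definition monom :: "('v \<Rightarrow>\<^sub>0 nat) \<Rightarrow> ('v, 'k::comm_ring_1) mpoly" where
  "monom \<alpha> = Poly_Mapping.single \<alpha> 1"

definition is_monomial :: "('v, 'k::comm_ring_1) mpoly \<Rightarrow> bool" where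
  "is_monomial f \<longleftrightarrow> (\<exists>\<alpha>. f = monom \<alpha>)"

definition var :: "'v \<Rightarrow> ('v, 'k::comm_ring_1) mpoly" where
  "var i = monom (Poly_Mapping.single i 1)"

definition monomial_ideal :: "('v, 'k::comm_ring_1) mpoly set \<Rightarrow> bool" where
  "monomial_ideal I \<longleftrightarrow> is_ideal I \<and> I = ideal_gen {u \<in> I. is_monomial u}"

definition monomial_prime :: "('v, 'k::comm_ring_1) mpoly set \<Rightarrow> bool" where
  "monomial_prime P \<longleftrightarrow> (\<exists>A. P = ideal_gen (var ` A))"

definition min_mon_gens :: "('v, 'k::comm_ring_1) mpoly set \<Rightarrow> ('v, 'k) mpoly set" where
  "min_mon_gens I = {u \<in> I. is_monomial u \<and>
      (\<forall>v \<in> I. is_monomial v \<and> v dvd u \<longrightarrow> v = u)}"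

definition gcd_one :: "'a::comm_ring_1 \<Rightarrow> 'a \<Rightarrow> bool" where
  "gcd_one a b \<longleftrightarrow> (\<forall>d. d dvd a \<and> d dvd b \<longrightarrow> d dvd 1)"

definition nearly_copersistent :: "('v, 'k::comm_ring_1) mpoly set \<Rightarrow> bool" where
  "nearly_copersistent I \<longleftrightarrow> (\<exists>s::nat. s > 0 \<and> (\<exists>p. monomial_prime p \<and>
      (\<forall>m. 1 \<le> m \<and> m \<le> s \<longrightarrow> Ass (ideal_pow I m) \<union> {p} \<supseteq> Ass (ideal_pow I (m + 1))) \<and>
      (\<forall>m. m \<ge> s + 1 \<longrightarrow> Ass (ideal_pow I m) \<supseteq> Ass (ideal_pow I (m + 1)))))"

end

theory Submission
  imports Defs
begin

text \<open>Write \<open>h = x\<^sup>a\<close>. Since no minimal generator of \<open>I\<close> shares a variable with \<open>x\<^sup>a\<close>,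
every power \<open>I\<^sup>m\<close> is generated by monomials coprime to \<open>x\<^sup>a\<close>, so \<open>h\<close> is a nonzerodivisor
modulo \<open>I\<^sup>m\<close> and \<open>(hI)\<^sup>m = h\<^sup>m I\<^sup>m = h\<^sup>m R \<inter> I\<^sup>m\<close>. A prime annihilator
\<open>(h\<^sup>m R \<inter> I\<^sup>m : f)\<close> is one of \<open>(h\<^sup>m R : f)\<close> and \<open>(I\<^sup>m : f)\<close>, which gives the disjoint
union \<open>Ass(R/(hI)\<^sup>m) = Ass(R/I\<^sup>m) \<union> Ass(R/hR)\<close> for \<open>m \<ge> 1\<close>. Adding the same set to every
term of a sequence, disjointly, does not affect nearly copersistence.\<close>

lemma is_ideal_zero: "is_ideal J \<Longrightarrow> 0 \<in> J"
  unfolding is_ideal_def by auto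

lemma is_ideal_add: "is_ideal J \<Longrightarrow> a \<in> J \<Longrightarrow> b \<in> J \<Longrightarrow> a + b \<in> J"
  unfolding is_ideal_def by auto

lemma is_ideal_mult_left: "is_ideal J \<Longrightarrow> a \<in> J \<Longrightarrow> r * a \<in> J"
  unfolding is_ideal_def by auto

lemma is_ideal_mult_right: "is_ideal J \<Longrightarrow> a \<in> J \<Longrightarrow> a * r \<in> J"
  by (metis is_ideal_mult_left mult.commute)

lemma is_ideal_ideal_gen: "is_ideal (ideal_gen S)"
  unfolding is_ideal_def ideal_gen_def by auto

lemma is_ideal_UNIV: "is_ideal UNIV"
  unfolding is_ideal_def by simp

lemma ideal_gen_subset: "S \<subseteq> ideal_gen S"
  unfolding ideal_gen_def by auto

lemma ideal_gen_least: "is_ideal J \<Longrightarrow> S \<subseteq> J \<Longrightarrow> ideal_gen S \<subseteq> J"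
  unfolding ideal_gen_def by auto

lemma ideal_gen_mono: "S \<subseteq> T \<Longrightarrow> ideal_gen S \<subseteq> ideal_gen T"
  by (meson ideal_gen_least ideal_gen_subset is_ideal_ideal_gen order_trans)

lemma ideal_gen_empty: "ideal_gen {} = {0 :: 'a::comm_ring_1}"
proof -
  have "is_ideal {0 :: 'a}"
    unfolding is_ideal_def by auto
  then show ?thesis
    using ideal_gen_least[of "{0::'a}" "{}"] is_ideal_zero[OF is_ideal_ideal_gen] by auto
qed

lemma ideal_gen_one: "ideal_gen {1 :: 'a::comm_ring_1} = UNIV"
  using is_ideal_mult_left[OF is_ideal_ideal_gen, of 1 "{1}"] ideal_gen_subset[of "{1::'a}"] by auto

lemma is_ideal_colon: "is_ideal J \<Longrightarrow> is_ideal {x. c * x \<in> J}"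
  unfolding is_ideal_def by (simp add: distrib_left mult.left_commute)

lemma is_ideal_image_mult:
  assumes J: "is_ideal J"
  shows "is_ideal ((*) c ` J)"
  unfolding is_ideal_def
proof (intro conjI ballI allI)
  show "0 \<in> (*) c ` J"
    using image_eqI[of 0 "(*) c" 0] is_ideal_zero[OF J] by simp
next
  fix x y assume "x \<in> (*) c ` J" "y \<in> (*) c ` J"
  then show "x + y \<in> (*) c ` J"
    using is_ideal_add[OF J] by (auto simp flip: distrib_left)
next
  fix r x assume "x \<in> (*) c ` J"
  then show "r * x \<in> (*) c ` J"
    using is_ideal_mult_left[OF J] by (auto simp: mult.left_commute[of r c])
qed

lemma is_ideal_ideal_pow: "is_ideal (ideal_pow I m)"
  by (cases m) (simp_all add: is_ideal_UNIV is_ideal_ideal_gen)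

lemma ideal_gen_image_mult: "ideal_gen ((*) c ` S) = (*) c ` ideal_gen S"
proof
  show "ideal_gen ((*) c ` S) \<subseteq> (*) c ` ideal_gen S"
    by (intro ideal_gen_least is_ideal_image_mult is_ideal_ideal_gen image_mono ideal_gen_subset)
  have "ideal_gen S \<subseteq> {x. c * x \<in> ideal_gen ((*) c ` S)}"
    using ideal_gen_subset[of "(*) c ` S"]
    by (intro ideal_gen_least is_ideal_colon is_ideal_ideal_gen) auto
  then show "(*) c ` ideal_gen S \<subseteq> ideal_gen ((*) c ` S)"
    by auto
qed

lemma ideal_gen_mult_ideal_gen:
  "ideal_gen {a * b | a b. a \<in> ideal_gen S \<and> b \<in> ideal_gen T}
   = ideal_gen {s * t | s t. s \<in> S \<and> t \<in> T}"
proof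
  let ?G = "ideal_gen {s * t | s t. s \<in> S \<and> t \<in> T}"
  have G: "is_ideal ?G"
    by (rule is_ideal_ideal_gen)
  have "a * t \<in> ?G" if "a \<in> ideal_gen S" "t \<in> T" for a t
  proof -
    have "ideal_gen S \<subseteq> {x. t * x \<in> ?G}"
      using ideal_gen_subset[of "{s * t | s t. s \<in> S \<and> t \<in> T}"] that(2)
      by (intro ideal_gen_least is_ideal_colon G) (auto simp: mult.commute)
    then show ?thesis
      using that(1) by (auto simp: mult.commute)
  qed
  then have "a * b \<in> ?G" if "a \<in> ideal_gen S" "b \<in> ideal_gen T" for a b
    using ideal_gen_least[OF is_ideal_colon[OF G, of a], of T] that by auto
  then show "ideal_gen {a * b | a b. a \<in> ideal_gen S \<and> b \<in> ideal_gen T} \<subseteq> ?G"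
    by (intro ideal_gen_least G) auto
  show "?G \<subseteq> ideal_gen {a * b | a b. a \<in> ideal_gen S \<and> b \<in> ideal_gen T}"
    using ideal_gen_subset[of S] ideal_gen_subset[of T] by (intro ideal_gen_mono) blast
qed

lemma ideal_pow_image_mult: "ideal_pow ((*) h ` I) m = (*) (h ^ m) ` ideal_pow I m"
proof (induction m)
  case 0
  then show ?case
    by simp
next
  case (Suc m)
  have "{a * b | a b. a \<in> (*) h ` I \<and> b \<in> (*) (h ^ m) ` ideal_pow I m}
      = (*) (h ^ Suc m) ` {a * b | a b. a \<in> I \<and> b \<in> ideal_pow I m}"
    by (auto simp: image_iff) (metis mult.assoc mult.left_commute power_Suc)+
  then show ?case
    by (simp add: Suc ideal_gen_image_mult)
qed

lemma power_mem_ideal_pow: "v \<in> I \<Longrightarrow> v ^ m \<in> ideal_pow I m"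
  by (induction m) (auto intro: ideal_gen_subset[THEN subsetD])

section \<open>Associated primes of \<open>h\<^sup>m J\<close> for a nonzerodivisor \<open>h\<close> modulo \<open>J\<close>\<close>

lemma prime_ideal_one_notin: "prime_ideal P \<Longrightarrow> 1 \<notin> P"
  unfolding prime_ideal_def using is_ideal_mult_right[of P 1] by auto

lemma prime_ideal_power_mem: "prime_ideal P \<Longrightarrow> h ^ n \<in> P \<Longrightarrow> h \<in> P"
  by (induction n) (auto simp: prime_ideal_one_notin, auto simp: prime_ideal_def)

lemma prime_ideal_Int_eq:
  assumes "prime_ideal (A \<inter> B)"
    and "\<And>r a. a \<in> A \<Longrightarrow> a * r \<in> A" and "\<And>r b. b \<in> B \<Longrightarrow> r * b \<in> B"
  shows "A \<inter> B = A \<or> A \<inter> B = B"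
  using assms unfolding prime_ideal_def by blast

lemma power_mult_mem_imp_mem:
  fixes h :: "'a::comm_ring_1"
  assumes "\<forall>f. h * f \<in> J \<longrightarrow> f \<in> J"
  shows "h ^ n * f \<in> J \<Longrightarrow> f \<in> J"
  using assms by (induction n) (auto simp: mult.assoc)

lemma dvd_power_mult_imp_dvd:
  fixes h :: "'a::comm_ring_1"
  assumes "\<forall>y. h dvd u * y \<longrightarrow> h dvd y"
  shows "h dvd u ^ n * y \<Longrightarrow> h dvd y"
proof (induction n)
  case (Suc n)
  then have "h dvd u * (u ^ n * y)"
    by (simp add: mult.assoc)
  then show ?case
    using assms Suc.IH by blast
qed simp

lemma inj_mult_power:
  fixes h :: "'a::comm_ring_1"
  assumes "inj ((*) h)"
  shows "inj ((*) (h ^ n))"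
proof (induction n)
  case (Suc n)
  have "(*) (h ^ Suc n) = (*) h \<circ> (*) (h ^ n)"
    by (auto simp: fun_eq_iff mult.assoc)
  with inj_compose[OF assms Suc.IH] show ?case
    by (simp only:)
qed simp

lemma power_Suc_dvd_mult_power_iff:
  fixes h :: "'a::comm_ring_1"
  assumes cancel: "inj ((*) h)"
  shows "h ^ Suc k dvd g * (h ^ k * y) \<longleftrightarrow> h dvd g * y"
proof
  assume "h ^ Suc k dvd g * (h ^ k * y)"
  then obtain t where "g * (h ^ k * y) = h ^ Suc k * t" ..
  then have "h ^ k * (g * y) = h ^ k * (h * t)"
    by (simp add: algebra_simps)
  then have "g * y = h * t"
    by (rule injD[OF inj_mult_power[OF cancel]])
  then show "h dvd g * y" ..
next
  assume "h dvd g * y"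
  then obtain t where "g * y = h * t" ..
  then have "g * (h ^ k * y) = h ^ Suc k * t"
    by (metis mult.assoc mult.left_commute power_Suc)
  then show "h ^ Suc k dvd g * (h ^ k * y)" ..
qed

lemma image_mult_power_eq_Int:
  assumes J: "is_ideal J" and nzd: "\<forall>f. h * f \<in> J \<longrightarrow> f \<in> J"
  shows "(*) (h ^ m) ` J = {x. h ^ m dvd x} \<inter> J"
proof (intro equalityI subsetI)
  fix x assume "x \<in> (*) (h ^ m) ` J"
  then obtain f where "f \<in> J" "x = h ^ m * f" ..
  then show "x \<in> {x. h ^ m dvd x} \<inter> J"
    using is_ideal_mult_left[OF J] by simp
next
  fix x assume "x \<in> {x. h ^ m dvd x} \<inter> J"
  then obtain f where "x = h ^ m * f" "h ^ m * f \<in> J"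
    by (auto elim: dvdE)
  then show "x \<in> (*) (h ^ m) ` J"
    using power_mult_mem_imp_mem[OF nzd] by blast
qed

lemma prime_colon_power_mem_Ass_principal:
  fixes h :: "'a::comm_ring_1"
  assumes cancel: "inj ((*) h)" and "0 < m"
    and P: "prime_ideal {g. h ^ m dvd g * f}"
  shows "{g. h ^ m dvd g * f} \<in> Ass {x. h dvd x}"
proof -
  obtain k where m: "m = Suc k"
    using \<open>0 < m\<close> gr0_implies_Suc by blast
  have "h ^ m \<in> {g. h ^ m dvd g * f}"
    by simp
  then have "h ^ Suc k dvd h * f"
    using prime_ideal_power_mem[OF P] m by blast
  then obtain t where "h * f = h * (h ^ k * t)"
    by (auto simp: dvd_def mult.assoc)
  then have "f = h ^ k * t"
    by (rule injD[OF cancel])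
  then have "{g. h ^ m dvd g * f} = {g. h dvd g * t}"
    using power_Suc_dvd_mult_power_iff[OF cancel] m by simp
  then show ?thesis
    using P unfolding Ass_def by auto
qed

lemma Ass_image_mult_power_subset:
  fixes h :: "'a::comm_ring_1"
  assumes J: "is_ideal J" and cancel: "inj ((*) h)"
    and nzd: "\<forall>f. h * f \<in> J \<longrightarrow> f \<in> J" and "0 < m"
  shows "Ass ((*) (h ^ m) ` J) \<subseteq> Ass J \<union> Ass {x. h dvd x}"
proof
  fix P assume "P \<in> Ass ((*) (h ^ m) ` J)"
  then obtain f where P: "prime_ideal P" and "P = {g. g * f \<in> (*) (h ^ m) ` J}"
    unfolding Ass_def by blast
  then have Pf: "P = {g. h ^ m dvd g * f} \<inter> {g. g * f \<in> J}"
    by (auto simp: image_mult_power_eq_Int[OF J nzd])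
  have "P = {g. h ^ m dvd g * f} \<or> P = {g. g * f \<in> J}"
    using prime_ideal_Int_eq[of "{g. h ^ m dvd g * f}" "{g. g * f \<in> J}"] P Pf
      is_ideal_mult_left[OF J] by (auto simp: mult.assoc mult.left_commute)
  then show "P \<in> Ass J \<union> Ass {x. h dvd x}"
    using P prime_colon_power_mem_Ass_principal[OF cancel \<open>0 < m\<close>] unfolding Ass_def by auto
qed

lemma Ass_subset_Ass_image_mult_power:
  fixes h :: "'a::comm_ring_1"
  assumes J: "is_ideal J" and nzd: "\<forall>f. h * f \<in> J \<longrightarrow> f \<in> J"
  shows "Ass J \<subseteq> Ass ((*) (h ^ m) ` J)"
proof
  fix P assume "P \<in> Ass J"
  then obtain f where P: "prime_ideal P" and Pf: "P = {g. g * f \<in> J}"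
    unfolding Ass_def by blast
  have "g * (h ^ m * f) \<in> (*) (h ^ m) ` J \<longleftrightarrow> g * f \<in> J" for g
  proof -
    have eq: "g * (h ^ m * f) = h ^ m * (g * f)"
      by (simp add: mult.left_commute)
    show ?thesis
    proof
      assume "g * (h ^ m * f) \<in> (*) (h ^ m) ` J"
      then obtain j where "j \<in> J" "h ^ m * (g * f) = h ^ m * j"
        unfolding eq by blast
      then have "h ^ m * (g * f) \<in> J"
        using is_ideal_mult_left[OF J] by simp
      then show "g * f \<in> J"
        by (rule power_mult_mem_imp_mem[OF nzd])
    qed (simp add: eq)
  qed
  then have "P = {g. g * (h ^ m * f) \<in> (*) (h ^ m) ` J}"
    using Pf by blast
  then show "P \<in> Ass ((*) (h ^ m) ` J)"
    using P unfolding Ass_def by blast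
qed

lemma Ass_principal_subset_Ass_image_mult_power:
  fixes h :: "'a::comm_ring_1"
  assumes J: "is_ideal J" and cancel: "inj ((*) h)"
    and "u \<in> J" and u_coprime: "\<forall>y. h dvd u * y \<longrightarrow> h dvd y" and "0 < m"
  shows "Ass {x. h dvd x} \<subseteq> Ass ((*) (h ^ m) ` J)"
proof
  fix P assume "P \<in> Ass {x. h dvd x}"
  then obtain f where P: "prime_ideal P" and Pf: "P = {g. h dvd g * f}"
    unfolding Ass_def by auto
  obtain k where m: "m = Suc k"
    using \<open>0 < m\<close> gr0_implies_Suc by blast
  have "g * (h ^ k * (f * u)) \<in> (*) (h ^ m) ` J \<longleftrightarrow> h dvd g * f" for g
  proof
    assume "g * (h ^ k * (f * u)) \<in> (*) (h ^ m) ` J"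
    then obtain j where "g * (h ^ k * (f * u)) = h ^ m * j"
      by blast
    then have "h ^ Suc k dvd g * (h ^ k * (f * u))"
      using m by simp
    then have "h dvd g * (f * u)"
      by (simp only: power_Suc_dvd_mult_power_iff[OF cancel])
    then have "h dvd u * (g * f)"
      by (simp add: ac_simps)
    then show "h dvd g * f"
      using u_coprime by blast
  next
    assume "h dvd g * f"
    then obtain t where t: "g * f = h * t" ..
    have "g * (h ^ k * (f * u)) = h ^ k * (g * f) * u"
      by (simp add: ac_simps)
    also have "\<dots> = h ^ k * (h * t) * u"
      by (simp only: t)
    also have "\<dots> = h ^ m * (t * u)"
      using m by (simp add: ac_simps)
    finally have "g * (h ^ k * (f * u)) = h ^ m * (t * u)" .
    moreover have "t * u \<in> J"
      using is_ideal_mult_left[OF J \<open>u \<in> J\<close>] .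
    ultimately show "g * (h ^ k * (f * u)) \<in> (*) (h ^ m) ` J"
      by simp
  qed
  then have "P = {g. g * (h ^ k * (f * u)) \<in> (*) (h ^ m) ` J}"
    using Pf by blast
  then show "P \<in> Ass ((*) (h ^ m) ` J)"
    using P unfolding Ass_def by blast
qed

lemma Ass_image_mult_power:
  fixes h :: "'a::comm_ring_1"
  assumes "is_ideal J" and "inj ((*) h)"
    and "\<forall>f. h * f \<in> J \<longrightarrow> f \<in> J"
    and "u \<in> J" and "\<forall>y. h dvd u * y \<longrightarrow> h dvd y" and "0 < m"
  shows "Ass ((*) (h ^ m) ` J) = Ass J \<union> Ass {x. h dvd x}"
  using Ass_image_mult_power_subset[OF assms(1-3,6)] Ass_subset_Ass_image_mult_power[OF assms(1,3)]
    Ass_principal_subset_Ass_image_mult_power[OF assms(1,2,4-6)]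
  by blast

lemma Ass_Int_Ass_principal_eq_empty:
  fixes h :: "'a::comm_ring_1"
  assumes nzd: "\<forall>f. h * f \<in> J \<longrightarrow> f \<in> J"
  shows "Ass J \<inter> Ass {x. h dvd x} = {}"
proof (rule ccontr)
  assume "Ass J \<inter> Ass {x. h dvd x} \<noteq> {}"
  then obtain P f f' where P: "prime_ideal P" and Pf: "P = {g. g * f \<in> J}"
    and Ph: "P = {g. h dvd g * f'}"
    unfolding Ass_def by auto
  have "h \<in> P"
    unfolding Ph by simp
  then have "h * f \<in> J"
    using Pf by blast
  then have "1 \<in> P"
    using Pf nzd by simp
  then show False
    using prime_ideal_one_notin[OF P] by blast
qed

section \<open>Nearly decreasing sequences of sets\<close>

definition nearly_decreasing :: "('a \<Rightarrow> bool) \<Rightarrow> (nat \<Rightarrow> 'a set) \<Rightarrow> bool" where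
  "nearly_decreasing Q A \<longleftrightarrow> (\<exists>s::nat. s > 0 \<and> (\<exists>p. Q p \<and>
      (\<forall>m. 1 \<le> m \<and> m \<le> s \<longrightarrow> A m \<union> {p} \<supseteq> A (m + 1)) \<and>
      (\<forall>m. m \<ge> s + 1 \<longrightarrow> A m \<supseteq> A (m + 1))))"

lemma nearly_copersistent_iff_nearly_decreasing:
  "nearly_copersistent I \<longleftrightarrow> nearly_decreasing monomial_prime (\<lambda>m. Ass (ideal_pow I m))"
  unfolding nearly_copersistent_def nearly_decreasing_def ..

lemma nearly_decreasing_Un_disjoint:
  assumes "\<And>m. m \<ge> 1 \<Longrightarrow> B m = A m \<union> D" and "\<And>m. m \<ge> 1 \<Longrightarrow> A m \<inter> D = {}"
  shows "nearly_decreasing Q A \<longleftrightarrow> nearly_decreasing Q B"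
proof -
  have "B (m + 1) \<subseteq> B m \<longleftrightarrow> A (m + 1) \<subseteq> A m"
    and "B (m + 1) \<subseteq> insert p (B m) \<longleftrightarrow> A (m + 1) \<subseteq> insert p (A m)" if "m \<ge> 1" for m p
    using assms[of m] assms[of "m + 1"] that by auto
  then show ?thesis
    unfolding nearly_decreasing_def by simp
qed

lemma lookup_map_key:
  assumes [transfer_rule]: "inj f"
  shows "Poly_Mapping.lookup (Poly_Mapping.map_key f p) k = Poly_Mapping.lookup p (f k)"
  by transfer simp

lemma lookup_monom_mult:
  "Poly_Mapping.lookup (monom b * q) g = (\<Sum>d. Poly_Mapping.lookup q d when g = b + d)"
  by (simp add: monom_def Poly_Mapping.lookup_mult Poly_Mapping.lookup_single when_mult)

lemma lookup_monom_mult_add: "Poly_Mapping.lookup (monom b * q) (b + d) = Poly_Mapping.lookup q d"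
  by (simp add: lookup_monom_mult)

lemma lookup_monom_mult_eq_0:
  "\<nexists>d. g = b + d \<Longrightarrow> Poly_Mapping.lookup (monom b * q) g = 0"
  by (simp add: lookup_monom_mult when_def)

lemma monom_mult_monom: "monom b * monom c = (monom (b + c) :: ('v, 'k::comm_ring_1) mpoly)"
  by (simp add: monom_def mult_single)

lemma monom_dvd_monom_imp_add:
  assumes "(monom b :: ('v, 'k::comm_ring_1) mpoly) dvd monom c"
  shows "\<exists>e. c = b + e"
proof (rule ccontr)
  assume "\<nexists>e. c = b + e"
  moreover obtain q where "monom c = (monom b * q :: ('v, 'k) mpoly)"
    using assms ..
  ultimately have "Poly_Mapping.lookup (monom c :: ('v, 'k) mpoly) c = 0"
    using lookup_monom_mult_eq_0 by metis
  then show False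
    by (simp add: monom_def)
qed

text \<open>Division by \<open>x\<^sup>a\<close> that discards the terms not divisible by \<open>x\<^sup>a\<close>.\<close>

definition div_monom :: "('v \<Rightarrow>\<^sub>0 nat) \<Rightarrow> ('v, 'k::comm_ring_1) mpoly \<Rightarrow> ('v, 'k) mpoly" where
  "div_monom a F = Poly_Mapping.map_key ((+) a) F"

lemma lookup_div_monom: "Poly_Mapping.lookup (div_monom a F) d = Poly_Mapping.lookup F (a + d)"
  by (simp add: div_monom_def lookup_map_key)

lemma div_monom_add: "div_monom a (F + G) = div_monom a F + div_monom a G"
  by (simp add: div_monom_def map_key_plus)

lemma div_monom_zero [simp]: "div_monom a 0 = 0"
  by (simp add: div_monom_def)

lemma div_monom_monom_mult [simp]: "div_monom a (monom a * f) = f"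
  by (rule poly_mapping_eqI) (simp add: lookup_div_monom lookup_monom_mult_add)

lemma keys_disjoint_add_cancel:
  fixes a b d e :: "'v \<Rightarrow>\<^sub>0 nat"
  assumes "Poly_Mapping.keys a \<inter> Poly_Mapping.keys b = {}" and "a + d = b + e"
  shows "\<exists>e'. d = b + e'"
proof (intro exI poly_mapping_eqI)
  fix i
  have "Poly_Mapping.lookup a i + Poly_Mapping.lookup d i = Poly_Mapping.lookup b i + Poly_Mapping.lookup e i"
    using assms(2) by (metis lookup_add)
  moreover have "Poly_Mapping.lookup a i = 0 \<or> Poly_Mapping.lookup b i = 0"
    using assms(1) by (auto simp: in_keys_iff)
  ultimately show "Poly_Mapping.lookup d i = Poly_Mapping.lookup (b + (d - b)) i"
    by (auto simp: lookup_add lookup_minus)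
qed

lemma div_monom_mult_monom:
  assumes disjoint: "Poly_Mapping.keys a \<inter> Poly_Mapping.keys b = {}"
  shows "div_monom a (r * monom b) = div_monom a r * monom b"
proof (rule poly_mapping_eqI)
  fix d
  show "Poly_Mapping.lookup (div_monom a (r * monom b)) d = Poly_Mapping.lookup (div_monom a r * monom b) d"
  proof (cases "\<exists>e. d = b + e")
    case True
    then obtain e where "d = b + e" ..
    then show ?thesis
      by (simp add: lookup_div_monom mult.commute[of _ "monom b"] add.left_commute[of a b]
          lookup_monom_mult_add)
  next
    case False
    then have "\<nexists>e. a + d = b + e"
      using keys_disjoint_add_cancel[OF disjoint] by blast
    then show ?thesis
      using False by (simp add: lookup_div_monom mult.commute[of _ "monom b"] lookup_monom_mult_eq_0)
  qed
qed

lemma inj_monom_mult: "inj ((*) (monom a))"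
  by (rule injI) (metis div_monom_monom_mult)

lemma monom_dvd_monom_mult_disjoint:
  fixes y :: "('v, 'k::comm_ring_1) mpoly"
  assumes disjoint: "Poly_Mapping.keys a \<inter> Poly_Mapping.keys c = {}" and "monom a dvd monom c * y"
  shows "monom a dvd y"
proof -
  obtain q where q: "monom c * y = monom a * q"
    using assms(2) ..
  have "q = div_monom a (monom a * q)"
    by simp
  also have "\<dots> = div_monom a (y * monom c)"
    by (simp only: mult.commute[of y] q)
  also have "\<dots> = div_monom a y * monom c"
    by (rule div_monom_mult_monom[OF disjoint])
  finally have "q = div_monom a y * monom c" .
  then have "monom c * y = monom c * (monom a * div_monom a y)"
    using q by (simp add: ac_simps)
  then show ?thesis
    using injD[OF inj_monom_mult] by (metis dvd_triv_left)
qed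

lemma var_not_dvd_one: "\<not> (var i :: ('v, 'k::comm_ring_1) mpoly) dvd 1"
proof
  assume "(var i :: ('v, 'k) mpoly) dvd 1"
  then have "(monom (Poly_Mapping.single i 1) :: ('v, 'k) mpoly) dvd monom 0"
    by (simp add: var_def monom_def)
  then obtain e where "(0 :: 'v \<Rightarrow>\<^sub>0 nat) = Poly_Mapping.single i 1 + e"
    using monom_dvd_monom_imp_add by blast
  then have "Poly_Mapping.lookup (Poly_Mapping.single i 1 + e) i = Poly_Mapping.lookup 0 i"
    by simp
  then show False
    by (simp add: lookup_add)
qed

lemma var_dvd_monom:
  assumes "i \<in> Poly_Mapping.keys c"
  shows "(var i :: ('v, 'k::comm_ring_1) mpoly) dvd monom c"
proof
  have "c = Poly_Mapping.single i 1 + (c - Poly_Mapping.single i 1)"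
    using assms by (intro poly_mapping_eqI) (auto simp: lookup_add lookup_minus lookup_single when_def in_keys_iff)
  then show "monom c = (var i :: ('v, 'k) mpoly) * monom (c - Poly_Mapping.single i 1)"
    by (metis monom_mult_monom var_def)
qed

lemma gcd_one_monom_imp_keys_disjoint:
  assumes "gcd_one (monom a :: ('v, 'k::comm_ring_1) mpoly) (monom b)"
  shows "Poly_Mapping.keys a \<inter> Poly_Mapping.keys b = {}"
proof (rule ccontr)
  assume "Poly_Mapping.keys a \<inter> Poly_Mapping.keys b \<noteq> {}"
  then obtain i where "i \<in> Poly_Mapping.keys a" "i \<in> Poly_Mapping.keys b"
    by blast
  then have "(var i :: ('v, 'k) mpoly) dvd monom a" "(var i :: ('v, 'k) mpoly) dvd monom b"
    by (simp_all add: var_dvd_monom)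
  then have "(var i :: ('v, 'k) mpoly) dvd 1"
    using assms[unfolded gcd_one_def, rule_format, of "var i"] by blast
  with var_not_dvd_one show False ..
qed

section \<open>Monomial ideals whose generators are coprime to a monomial\<close>

lemma exists_min_mon_gen_dvd:
  "monom b \<in> I \<Longrightarrow> \<exists>v \<in> min_mon_gens I. v dvd monom b"
proof (induction "Sum_any (Poly_Mapping.lookup b)" arbitrary: b rule: less_induct)
  case less
  show ?case
  proof (cases "monom b \<in> min_mon_gens I")
    case True
    then show ?thesis
      using dvd_refl by blast
  next
    case False
    then obtain v where v: "v \<in> I" "is_monomial v" "v dvd monom b" "v \<noteq> monom b"
      using less.prems is_monomial_def unfolding min_mon_gens_def by blast
    from v(2) obtain c where c: "v = monom c"
      unfolding is_monomial_def ..
    then obtain e where e: "b = c + e"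
      using v(3) monom_dvd_monom_imp_add by blast
    have "e \<noteq> 0"
      using e c v(4) by auto
    then have "Poly_Mapping.lookup e \<noteq> (\<lambda>_. 0)"
      by (metis lookup_zero poly_mapping_eqI)
    then have "0 < Sum_any (Poly_Mapping.lookup e)"
      using Sum_any_eq_zero_iff[OF finite_lookup] by (metis gr0I)
    then have "Sum_any (Poly_Mapping.lookup c) < Sum_any (Poly_Mapping.lookup b)"
      unfolding e by (simp add: lookup_add Sum_any.distrib)
    then obtain w where "w \<in> min_mon_gens I" "w dvd v"
      using less.hyps v(1) c by blast
    then show ?thesis
      using v(3) dvd_trans by blast
  qed
qed

lemma monomial_ideal_eq_ideal_gen_min_mon_gens:
  assumes "monomial_ideal I"
  shows "I = ideal_gen (min_mon_gens I)"
proof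
  have I: "is_ideal I" "I = ideal_gen {u \<in> I. is_monomial u}"
    using assms unfolding monomial_ideal_def by auto
  show "ideal_gen (min_mon_gens I) \<subseteq> I"
    using I(1) by (rule ideal_gen_least) (auto simp: min_mon_gens_def)
  have "{u \<in> I. is_monomial u} \<subseteq> ideal_gen (min_mon_gens I)"
  proof
    fix u assume "u \<in> {u \<in> I. is_monomial u}"
    then obtain v where "v \<in> min_mon_gens I" "v dvd u"
      using exists_min_mon_gen_dvd unfolding is_monomial_def by blast
    then show "u \<in> ideal_gen (min_mon_gens I)"
      using ideal_gen_subset is_ideal_mult_right[OF is_ideal_ideal_gen] by (fastforce elim: dvdE)
  qed
  then show "I \<subseteq> ideal_gen (min_mon_gens I)"
    using I(2) ideal_gen_least[OF is_ideal_ideal_gen] by blast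
qed

lemma min_mon_gens_nonempty:
  assumes "monomial_ideal I" and "I \<noteq> {0}"
  shows "min_mon_gens I \<noteq> {}"
  using assms monomial_ideal_eq_ideal_gen_min_mon_gens ideal_gen_empty by metis

definition monoms_coprime_to :: "('v \<Rightarrow>\<^sub>0 nat) \<Rightarrow> ('v, 'k::comm_ring_1) mpoly set" where
  "monoms_coprime_to a = {monom b | b. Poly_Mapping.keys a \<inter> Poly_Mapping.keys b = {}}"

lemma one_mem_monoms_coprime_to: "1 \<in> monoms_coprime_to a"
proof -
  have "1 = monom 0"
    by (simp add: monom_def)
  then show ?thesis
    unfolding monoms_coprime_to_def by auto
qed

lemma mult_mem_monoms_coprime_to:
  assumes "u \<in> monoms_coprime_to a" and "v \<in> monoms_coprime_to a"
  shows "u * v \<in> monoms_coprime_to a"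
proof -
  obtain b c where "u = monom b" "v = monom c"
    and "Poly_Mapping.keys a \<inter> Poly_Mapping.keys b = {}" "Poly_Mapping.keys a \<inter> Poly_Mapping.keys c = {}"
    using assms unfolding monoms_coprime_to_def by blast
  moreover have "Poly_Mapping.keys (b + c) \<subseteq> Poly_Mapping.keys b \<union> Poly_Mapping.keys c"
    by (rule keys_add)
  ultimately show ?thesis
    unfolding monoms_coprime_to_def by (auto simp: monom_mult_monom)
qed

lemma min_mon_gens_subset_monoms_coprime_to:
  assumes "\<forall>u \<in> min_mon_gens I. gcd_one (monom a) u"
  shows "min_mon_gens I \<subseteq> monoms_coprime_to a"
proof
  fix u assume u: "u \<in> min_mon_gens I"
  then obtain b where "u = monom b"
    unfolding min_mon_gens_def is_monomial_def by blast
  moreover have "gcd_one (monom a) u"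
    using assms u by blast
  ultimately show "u \<in> monoms_coprime_to a"
    unfolding monoms_coprime_to_def using gcd_one_monom_imp_keys_disjoint by blast
qed

lemma ideal_pow_generated_by_monoms_coprime_to:
  assumes "monomial_ideal I" and "\<forall>u \<in> min_mon_gens I. gcd_one (monom a) u"
  shows "\<exists>G \<subseteq> monoms_coprime_to a. ideal_pow I m = ideal_gen G"
proof -
  obtain S where S: "I = ideal_gen S" "S \<subseteq> monoms_coprime_to a"
    using monomial_ideal_eq_ideal_gen_min_mon_gens[OF assms(1)]
      min_mon_gens_subset_monoms_coprime_to[OF assms(2)] by blast
  show ?thesis
  proof (induction m)
    case 0
    show ?case
      using one_mem_monoms_coprime_to by (intro exI[of _ "{1}"]) (simp add: ideal_gen_one)
  next
    case (Suc m)
    then obtain G where G: "G \<subseteq> monoms_coprime_to a" "ideal_pow I m = ideal_gen G"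
      by blast
    have "ideal_pow I (Suc m) = ideal_gen {x * y | x y. x \<in> ideal_gen S \<and> y \<in> ideal_gen G}"
      by (simp only: ideal_pow.simps(2) G(2) flip: S(1))
    also have "\<dots> = ideal_gen {s * t | s t. s \<in> S \<and> t \<in> G}"
      by (rule ideal_gen_mult_ideal_gen)
    finally have "ideal_pow I (Suc m) = ideal_gen {s * t | s t. s \<in> S \<and> t \<in> G}" .
    moreover have "{s * t | s t. s \<in> S \<and> t \<in> G} \<subseteq> monoms_coprime_to a"
      using S(2) G(1) mult_mem_monoms_coprime_to by blast
    ultimately show ?case
      by blast
  qed
qed

text \<open>Since \<open>div_monom a\<close> commutes with multiplication by monomials coprime to \<open>x\<^sup>a\<close>,
the polynomials all of whose multiples stay in \<open>J\<close> after division by \<open>x\<^sup>a\<close> form an ideal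
containing the generators of \<open>J\<close>.\<close>

lemma monom_mult_mem_ideal_gen_imp_mem:
  fixes G :: "('v, 'k::comm_ring_1) mpoly set"
  assumes G: "G \<subseteq> monoms_coprime_to a" and "monom a * f \<in> ideal_gen G"
  shows "f \<in> ideal_gen G"
proof -
  let ?J = "ideal_gen G"
  let ?T = "{F. \<forall>r. div_monom a (r * F) \<in> ?J}"
  have J: "is_ideal ?J"
    by (rule is_ideal_ideal_gen)
  have "is_ideal ?T"
    unfolding is_ideal_def
    using is_ideal_zero[OF J] is_ideal_add[OF J]
    by (auto simp: distrib_left div_monom_add mult.assoc[symmetric])
  moreover have "G \<subseteq> ?T"
  proof
    fix g assume "g \<in> G"
    then obtain b where g: "g = monom b" and disjoint: "Poly_Mapping.keys a \<inter> Poly_Mapping.keys b = {}"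
      using G unfolding monoms_coprime_to_def by blast
    have "g \<in> ?J"
      using \<open>g \<in> G\<close> ideal_gen_subset by blast
    have "div_monom a (r * g) \<in> ?J" for r
      using is_ideal_mult_left[OF J \<open>g \<in> ?J\<close>, of "div_monom a r"]
      unfolding g div_monom_mult_monom[OF disjoint] .
    then show "g \<in> ?T"
      by blast
  qed
  ultimately have "?J \<subseteq> ?T"
    by (rule ideal_gen_least)
  then have "div_monom a (1 * (monom a * f)) \<in> ?J"
    using assms(2) by blast
  then show ?thesis
    by simp
qed

lemma monom_mult_mem_ideal_pow_imp_mem:
  assumes "monomial_ideal I" and "\<forall>u \<in> min_mon_gens I. gcd_one (monom a) u"
    and "monom a * f \<in> ideal_pow I m"
  shows "f \<in> ideal_pow I m"
  using ideal_pow_generated_by_monoms_coprime_to[OF assms(1,2)] monom_mult_mem_ideal_gen_imp_mem assms(3)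
  by metis

lemma Ass_ideal_pow_image_mult_monom:
  fixes I :: "('v, 'k::comm_ring_1) mpoly set"
  assumes I: "monomial_ideal I" and coprime: "\<forall>u \<in> min_mon_gens I. gcd_one (monom a) u"
    and "I \<noteq> {0}" and "0 < m"
  shows "Ass (ideal_pow ((*) (monom a) ` I) m) = Ass (ideal_pow I m) \<union> Ass {x. monom a dvd x}"
proof -
  obtain v where v: "v \<in> min_mon_gens I"
    using min_mon_gens_nonempty[OF I \<open>I \<noteq> {0}\<close>] by blast
  then have "v \<in> monoms_coprime_to a"
    using min_mon_gens_subset_monoms_coprime_to[OF coprime] by blast
  then have "\<forall>y. monom a dvd v * y \<longrightarrow> monom a dvd y"
    unfolding monoms_coprime_to_def using monom_dvd_monom_mult_disjoint by blast
  then have "\<forall>y. monom a dvd v ^ m * y \<longrightarrow> monom a dvd y"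
    using dvd_power_mult_imp_dvd by blast
  moreover have "v ^ m \<in> ideal_pow I m"
    using v power_mem_ideal_pow unfolding min_mon_gens_def by blast
  moreover have "\<forall>f. monom a * f \<in> ideal_pow I m \<longrightarrow> f \<in> ideal_pow I m"
    using monom_mult_mem_ideal_pow_imp_mem[OF I coprime] by blast
  ultimately show ?thesis
    unfolding ideal_pow_image_mult
    using Ass_image_mult_power[OF is_ideal_ideal_pow inj_monom_mult] \<open>0 < m\<close> by blast
qed

theorem proposition4p10:
  fixes I :: "('v::finite, 'k::field) mpoly set"
    and h :: "('v, 'k) mpoly"
  assumes "monomial_ideal I"
    and "is_monomial h"
    and "\<forall>u \<in> min_mon_gens I. gcd_one h u"
  shows "nearly_copersistent I \<longleftrightarrow> nearly_copersistent ((\<lambda>f. h * f) ` I)"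
proof (cases "I = {0}")
  case True
  then show ?thesis
    by simp
next
  case False
  obtain a where h: "h = monom a"
    using assms(2) unfolding is_monomial_def by blast
  have coprime: "\<forall>u \<in> min_mon_gens I. gcd_one (monom a) u"
    using assms(3) h by simp
  have "Ass (ideal_pow ((*) h ` I) m) = Ass (ideal_pow I m) \<union> Ass {x. h dvd x}" if "m \<ge> 1" for m
    using Ass_ideal_pow_image_mult_monom[OF assms(1) coprime False] that h by simp
  moreover have "Ass (ideal_pow I m) \<inter> Ass {x. h dvd x} = {}" for m
    using Ass_Int_Ass_principal_eq_empty monom_mult_mem_ideal_pow_imp_mem[OF assms(1) coprime] h by blast
  ultimately show ?thesis
    unfolding nearly_copersistent_iff_nearly_decreasing by (rule nearly_decreasing_Un_disjoint)
qed

end
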